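(* Let $(h_{n,0},\dots,h_{n,n-3})$ be the $h$-vector of the Whitehouse complex $\Delta_n$ ($n\ge 3$), with the convention $h_{m,j}=0$ for $j<0$ or $j>m-3$. Then for all $n\ge 4$ and $0\le k\le n-3$, $$h_{n,k}=(k+1)\,h_{n-1,k}+(2n-k-5)\,h_{n-1,k-1}.$$
   Context: The Whitehouse complex $\Delta_n$ ($n\ge 3$) is the simplicial complex with vertex set $V_n=\{S\subseteq\{2,\dots,n\}: 2\le |S|\le n-2\}$, in which a subset $F\subseteq V_n$ is a face iff for all $S,T\in F$ one has $S\subseteq T$, $T\subseteq S$, or $S\cap T=\emptyset$; it is pure of dimension $n-4$. For a $(d-1)$-dimensional simplicial complex with $f_{j}$ faces of dimension $j$ ($f_{-1}=1$), the $h$-vector $(h_0,\dots,h_d)$ is given by $h_k=\sum_{i=0}^k(-1)^{k-i}\binom{d-i}{k-i}f_{i-1}$. For $\Delta_n$ we have $d=n-3$. *)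

theory Defs
  imports Main
begin

definition wh_vertices :: "nat \<Rightarrow> nat set set" where
  "wh_vertices n = {S. S \<subseteq> {2..n} \<and> 2 \<le> card S \<and> card S \<le> n - 2}"

definition wh_faces :: "nat \<Rightarrow> nat set set set" where
  "wh_faces n = {F. F \<subseteq> wh_vertices n \<and>
      (\<forall>S\<in>F. \<forall>T\<in>F. S \<subseteq> T \<or> T \<subseteq> S \<or> S \<inter> T = {})}"

definition wh_f :: "nat \<Rightarrow> int \<Rightarrow> int" where
  "wh_f n j = int (card {F \<in> wh_faces n. int (card F) = j + 1})"

definition wh_h :: "nat \<Rightarrow> int \<Rightarrow> int" where
  "wh_h n k = (if 0 \<le> k \<and> k \<le> int n - 3 then
     (\<Sum>i\<in>{0..k}. (-1) ^ nat (k - i) * int ((nat (int n - 3 - i)) choose (nat (k - i)))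
                   * wh_f n (i - 1))
   else 0)"

end

theory Submission
  imports Defs
begin

(* The faces of Delta_n are the laminar families of proper blocks (subsets of size at least 2
   other than the ground set) of A = {2..n}. A laminar family on A + a arises in exactly one way
   from a family G on A: either a is put into every block containing some X in G + {A}
   (same size, |G| + 1 choices), or moreover a new block Y + a is created for some Y in G + {A}
   or a singleton Y (one block more, |G| + 1 + |A| choices); the smallest block containing a,
   with a removed, recovers X resp. Y. Hence the face numbers satisfy
   f(n, i) = (i + 1) f(n - 1, i) + (i + n - 2) f(n - 1, i - 1), and the h-vector recurrence
   follows termwise from Pascal's rule and the absorption identity
   (r + 1) C(a, r + 1) = (a - r) C(a, r). *)

definition proper_blocks :: "'a set \<Rightarrow> 'a set set" where
  "proper_blocks A = {S. S \<subseteq> A \<and> 2 \<le> card S \<and> S \<noteq> A}"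

definition laminar :: "'a set set \<Rightarrow> bool" where
  "laminar F \<longleftrightarrow> (\<forall>S\<in>F. \<forall>T\<in>F. S \<subseteq> T \<or> T \<subseteq> S \<or> S \<inter> T = {})"

definition laminar_families :: "'a set \<Rightarrow> 'a set set set" where
  "laminar_families A = {F. F \<subseteq> proper_blocks A \<and> laminar F}"

definition laminar_count :: "'a set \<Rightarrow> nat \<Rightarrow> nat" where
  "laminar_count A i = card {F \<in> laminar_families A. card F = i}"

lemma laminar_insert:
  "laminar (insert N F) \<longleftrightarrow> laminar F \<and> (\<forall>S\<in>F. N \<subseteq> S \<or> S \<subseteq> N \<or> N \<inter> S = {})"
  unfolding laminar_def by blast

lemma finite_laminar_families: "finite A \<Longrightarrow> finite (laminar_families A)"
  by (rule finite_subset[of _ "Pow (Pow A)"]) (auto simp: laminar_families_def proper_blocks_def)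

lemma finite_laminar_family: "finite A \<Longrightarrow> F \<in> laminar_families A \<Longrightarrow> finite F"
  by (rule finite_subset[of _ "Pow A"]) (auto simp: laminar_families_def proper_blocks_def)

lemma laminar_count_zero:
  assumes "finite A"
  shows "laminar_count A 0 = 1"
proof -
  have "{F \<in> laminar_families A. card F = 0} = {{}}"
  proof
    show "{F \<in> laminar_families A. card F = 0} \<subseteq> {{}}"
      using finite_laminar_family[OF assms] by auto
    show "{{}} \<subseteq> {F \<in> laminar_families A. card F = 0}"
      by (simp add: laminar_families_def laminar_def)
  qed
  then show ?thesis by (simp add: laminar_count_def)
qed

lemma insert_mem_proper_blocks:
  assumes "finite A" "a \<notin> A" "Y \<noteq> {}" "Y \<subseteq> A" "Y \<noteq> A"
  shows "insert a Y \<in> proper_blocks (insert a A)"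
proof -
  have "a \<notin> Y" "finite Y" using assms finite_subset by auto
  then have "card (insert a Y) \<ge> 2" using \<open>Y \<noteq> {}\<close> by (simp add: Suc_le_eq card_gt_0_iff)
  moreover have "insert a Y \<noteq> insert a A" using assms \<open>a \<notin> Y\<close> by (metis Diff_insert_absorb)
  ultimately show ?thesis using assms by (auto simp: proper_blocks_def)
qed

lemma proper_blocks_insert: "a \<notin> A \<Longrightarrow> S \<in> proper_blocks A \<Longrightarrow> S \<in> proper_blocks (insert a A)"
  by (auto simp: proper_blocks_def)

definition insert_if :: "('a set \<Rightarrow> bool) \<Rightarrow> 'a \<Rightarrow> 'a set \<Rightarrow> 'a set" where
  "insert_if P a S = (if P S then insert a S else S)"

lemma insert_if_Diff: "a \<notin> S \<Longrightarrow> insert_if P a S - {a} = S"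
  by (auto simp: insert_if_def)

lemma inj_on_insert_if: "(\<And>S. S \<in> G \<Longrightarrow> a \<notin> S) \<Longrightarrow> inj_on (insert_if P a) G"
  by (rule inj_on_inverseI[where g = "\<lambda>U. U - {a}"]) (simp add: insert_if_Diff)

lemma insert_if_mem_proper_blocks:
  assumes "finite A" "a \<notin> A" "S \<in> proper_blocks A"
  shows "insert_if P a S \<in> proper_blocks (insert a A)"
proof -
  have "S \<noteq> {}" "S \<subseteq> A" "S \<noteq> A" using assms(3) by (auto simp: proper_blocks_def)
  then show ?thesis
    using assms insert_mem_proper_blocks[of A a S] proper_blocks_insert[of a A S]
    by (simp add: insert_if_def)
qed

lemma laminar_insert_if_image:
  assumes "laminar G" and "\<And>S. S \<in> G \<Longrightarrow> a \<notin> S"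
    and "\<And>S T. S \<in> G \<Longrightarrow> T \<in> G \<Longrightarrow> S \<subseteq> T \<Longrightarrow> P S \<Longrightarrow> P T"
    and "\<And>S T. S \<in> G \<Longrightarrow> T \<in> G \<Longrightarrow> P S \<Longrightarrow> P T \<Longrightarrow> S \<inter> T \<noteq> {}"
  shows "laminar (insert_if P a ` G)"
  unfolding laminar_def
proof (intro ballI)
  fix U W assume "U \<in> insert_if P a ` G" "W \<in> insert_if P a ` G"
  then obtain S T where "S \<in> G" "T \<in> G" "U = insert_if P a S" "W = insert_if P a T" by blast
  note UW = \<open>U = insert_if P a S\<close> \<open>W = insert_if P a T\<close>
  have a: "a \<notin> S" "a \<notin> T" using assms(2) \<open>S \<in> G\<close> \<open>T \<in> G\<close> by auto
  have "S \<subseteq> T \<or> T \<subseteq> S \<or> S \<inter> T = {}" using assms(1) \<open>S \<in> G\<close> \<open>T \<in> G\<close> by (auto simp: laminar_def)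
  then show "U \<subseteq> W \<or> W \<subseteq> U \<or> U \<inter> W = {}"
  proof (elim disjE)
    assume "S \<subseteq> T"
    then show ?thesis using assms(3)[OF \<open>S \<in> G\<close> \<open>T \<in> G\<close>] UW by (auto simp: insert_if_def)
  next
    assume "T \<subseteq> S"
    then show ?thesis using assms(3)[OF \<open>T \<in> G\<close> \<open>S \<in> G\<close>] UW by (auto simp: insert_if_def)
  next
    assume "S \<inter> T = {}"
    then show ?thesis using assms(4)[OF \<open>S \<in> G\<close> \<open>T \<in> G\<close>] a UW by (auto simp: insert_if_def)
  qed
qed

definition add_leaf :: "'a \<Rightarrow> 'a set set \<Rightarrow> 'a set \<Rightarrow> 'a set set" where
  "add_leaf a G X = insert_if (\<lambda>S. X \<subseteq> S) a ` G"

(* For Y = A the block A + a would be the whole ground set; instead A itself becomes a block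
   and a lies in no block. *)
definition new_block :: "'a \<Rightarrow> 'a set \<Rightarrow> 'a set \<Rightarrow> 'a set" where
  "new_block a A Y = (if Y = A then A else insert a Y)"

definition add_block :: "'a \<Rightarrow> 'a set \<Rightarrow> 'a set set \<Rightarrow> 'a set \<Rightarrow> 'a set set" where
  "add_block a A G Y = insert (new_block a A Y) (insert_if (\<lambda>S. Y \<subset> S) a ` G)"

definition restrict_family :: "'a \<Rightarrow> 'a set \<Rightarrow> 'a set set \<Rightarrow> 'a set set" where
  "restrict_family a A F = (\<lambda>S. S - {a}) ` F \<inter> proper_blocks A"

definition anchor :: "'a \<Rightarrow> 'a set \<Rightarrow> 'a set set \<Rightarrow> 'a set" where
  "anchor a A F = (if \<exists>S\<in>F. a \<in> S then \<Inter>{S \<in> F. a \<in> S} - {a} else A)"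

(* The anchor of add_leaf a G X is X and that of add_block a A G Y is Y; it is a member of the
   family or a singleton exactly in the second case. *)
definition decompose :: "'a \<Rightarrow> 'a set \<Rightarrow> 'a set set \<Rightarrow> ('a set set \<times> 'a set) + ('a set set \<times> 'a set)" where
  "decompose a A F =
     (let G = restrict_family a A F; Y = anchor a A F
      in if Y \<in> F \<or> card Y = 1 then Inr (G, Y) else Inl (G, Y))"

lemma anchor_eqI:
  assumes "insert a Y \<in> F" "\<And>S. S \<in> F \<Longrightarrow> a \<in> S \<Longrightarrow> insert a Y \<subseteq> S" "a \<notin> Y"
  shows "anchor a A F = Y"
proof -
  have "\<Inter>{S \<in> F. a \<in> S} = insert a Y" using assms(1,2) by blast
  then show ?thesis using assms unfolding anchor_def by auto
qed

lemma anchor_eq_top: "(\<And>S. S \<in> F \<Longrightarrow> a \<notin> S) \<Longrightarrow> anchor a A F = A"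
  by (auto simp: anchor_def)

locale point_extension =
  fixes A :: "'a set" and a :: 'a
  assumes finite_A: "finite A" and fresh: "a \<notin> A" and two_le_card_A: "2 \<le> card A"
begin

lemma laminar_family_blocks:
  assumes "G \<in> laminar_families A" "S \<in> G"
  shows "S \<subseteq> A" "S \<noteq> A" "2 \<le> card S" "a \<notin> S" "S \<noteq> {}"
  using assms fresh by (auto simp: laminar_families_def proper_blocks_def)

lemma add_leaf_mem:
  assumes G: "G \<in> laminar_families A" and X: "X \<in> insert A G"
  shows "add_leaf a G X \<in> laminar_families (insert a A)" "card (add_leaf a G X) = card G"
proof -
  have "A \<noteq> {}" using two_le_card_A by auto
  then have "X \<noteq> {}" using X laminar_family_blocks(5)[OF G] by blast
  then have "laminar (add_leaf a G X)"
    unfolding add_leaf_def using G laminar_family_blocks[OF G]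
    by (intro laminar_insert_if_image) (auto simp: laminar_families_def)
  moreover have "add_leaf a G X \<subseteq> proper_blocks (insert a A)"
    using G insert_if_mem_proper_blocks[OF finite_A fresh]
    by (auto simp: add_leaf_def laminar_families_def)
  ultimately show "add_leaf a G X \<in> laminar_families (insert a A)"
    by (simp add: laminar_families_def)
  show "card (add_leaf a G X) = card G"
    unfolding add_leaf_def using laminar_family_blocks[OF G]
    by (intro card_image inj_on_insert_if) auto
qed

lemma new_block_mem_proper_blocks:
  assumes "Y \<noteq> {}" "Y \<subseteq> A"
  shows "new_block a A Y \<in> proper_blocks (insert a A)"
  using assms two_le_card_A fresh insert_mem_proper_blocks[OF finite_A fresh]
  by (auto simp: proper_blocks_def new_block_def)

lemma new_block_notin_image:
  assumes G: "G \<in> laminar_families A" and "a \<notin> Y"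
  shows "new_block a A Y \<notin> insert_if (\<lambda>S. Y \<subset> S) a ` G"
proof
  note blocks = laminar_family_blocks[OF G]
  assume "new_block a A Y \<in> insert_if (\<lambda>S. Y \<subset> S) a ` G"
  then obtain S where S: "S \<in> G" "new_block a A Y = insert_if (\<lambda>S. Y \<subset> S) a S" by blast
  show False
  proof (cases "Y = A")
    case True
    then have "\<not> Y \<subset> S" using blocks(1)[OF S(1)] by auto
    then show False using S blocks(2)[OF S(1)] True by (simp add: new_block_def insert_if_def)
  next
    case False
    then have "Y \<subset> S \<and> insert a Y = insert a S"
      using S blocks(4)[OF S(1)] by (auto simp: new_block_def insert_if_def split: if_splits)
    then show False using \<open>a \<notin> Y\<close> blocks(4)[OF S(1)] by (metis Diff_insert_absorb less_irrefl)
  qed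
qed

lemma laminar_add_block:
  assumes G: "G \<in> laminar_families A" and Y: "Y \<in> insert A G \<union> (\<lambda>x. {x}) ` A"
  shows "laminar (add_block a A G Y)"
proof -
  note blocks = laminar_family_blocks[OF G]
  have "A \<noteq> {}" using two_le_card_A by auto
  then have Y_sub: "Y \<noteq> {}" "a \<notin> Y" using Y blocks fresh by blast+
  have Y_nested: "S \<subseteq> Y \<or> Y \<subseteq> S \<or> S \<inter> Y = {}" if "S \<in> G" for S
  proof -
    from Y consider "Y = A" | "Y \<in> G" | x where "Y = {x}" by blast
    then show ?thesis
    proof cases
      case 2
      then show ?thesis using G that by (auto simp: laminar_families_def laminar_def)
    qed (use blocks(1)[OF that] in auto)
  qed
  have "laminar (insert_if (\<lambda>S. Y \<subset> S) a ` G)"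
    using G blocks Y_sub by (intro laminar_insert_if_image) (auto simp: laminar_families_def)
  moreover have "N \<subseteq> U \<or> U \<subseteq> N \<or> N \<inter> U = {}"
    if N: "N = new_block a A Y" and U: "U \<in> insert_if (\<lambda>S. Y \<subset> S) a ` G" for N U
  proof -
    obtain S where S: "S \<in> G" "U = insert_if (\<lambda>S. Y \<subset> S) a S" using U by blast
    show ?thesis
    proof (cases "Y \<subset> S")
      case True
      then show ?thesis using N S blocks(1)[OF S(1)] by (auto simp: new_block_def insert_if_def)
    next
      case False
      then show ?thesis using N S Y_nested[OF S(1)] blocks(1,4)[OF S(1)]
        by (auto simp: new_block_def insert_if_def)
    qed
  qed
  ultimately show ?thesis
    unfolding add_block_def laminar_insert by blast
qed

lemma add_block_mem:
  assumes G: "G \<in> laminar_families A" and Y: "Y \<in> insert A G \<union> (\<lambda>x. {x}) ` A"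
  shows "add_block a A G Y \<in> laminar_families (insert a A)" "card (add_block a A G Y) = Suc (card G)"
proof -
  note blocks = laminar_family_blocks[OF G]
  have "A \<noteq> {}" using two_le_card_A by auto
  then have Y_sub: "Y \<noteq> {}" "Y \<subseteq> A" "a \<notin> Y" using Y blocks fresh by blast+
  have "add_block a A G Y \<subseteq> proper_blocks (insert a A)"
    using G insert_if_mem_proper_blocks[OF finite_A fresh] new_block_mem_proper_blocks Y_sub
    by (auto simp: add_block_def laminar_families_def)
  then show "add_block a A G Y \<in> laminar_families (insert a A)"
    using laminar_add_block[OF G Y] by (simp add: laminar_families_def)
  show "card (add_block a A G Y) = Suc (card G)"
    unfolding add_block_def using new_block_notin_image[OF G Y_sub(3)] blocks
      finite_laminar_family[OF finite_A G]
    by (simp add: card_image inj_on_insert_if)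
qed

lemma restrict_family_mem: "F \<in> laminar_families (insert a A) \<Longrightarrow> restrict_family a A F \<in> laminar_families A"
  unfolding restrict_family_def laminar_families_def laminar_def by blast

context
  fixes F assumes F: "F \<in> laminar_families (insert a A)"
begin

lemma extension_blocks:
  assumes "S \<in> F"
  shows "S \<subseteq> insert a A" "S \<noteq> insert a A" "2 \<le> card S"
  using assms F by (auto simp: laminar_families_def proper_blocks_def)

lemma extension_laminar: "S \<in> F \<Longrightarrow> T \<in> F \<Longrightarrow> S \<subseteq> T \<or> T \<subseteq> S \<or> S \<inter> T = {}"
  using F by (auto simp: laminar_families_def laminar_def)

lemma anchor_block:
  assumes "S \<in> F" "a \<in> S"
  shows "insert a (anchor a A F) \<in> F"
proof -
  let ?C = "{S \<in> F. a \<in> S}"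
  have "finite ?C" using finite_laminar_family[OF _ F] finite_A by simp
  moreover have "subset.chain UNIV ?C" using extension_laminar unfolding subset_chain_def by blast
  ultimately have "\<Inter>?C \<in> ?C" using assms by (intro Inter_in_chain) auto
  moreover have "anchor a A F = \<Inter>?C - {a}" using assms by (auto simp: anchor_def)
  ultimately show ?thesis by (simp add: insert_absorb)
qed

lemma anchor_below: "S \<in> F \<Longrightarrow> a \<in> S \<Longrightarrow> insert a (anchor a A F) \<subseteq> S"
  by (auto simp: anchor_def)

lemma anchor_cases:
  obtains "\<forall>S\<in>F. a \<notin> S" "anchor a A F = A"
        | "insert a (anchor a A F) \<in> F" "anchor a A F \<noteq> A"
proof (cases "\<exists>S\<in>F. a \<in> S")
  case True
  then have "insert a (anchor a A F) \<in> F" using anchor_block by blast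
  moreover have "anchor a A F \<noteq> A" using extension_blocks(2)[OF calculation] by auto
  ultimately show ?thesis by (rule that(2))
next
  case False
  then show ?thesis by (intro that(1)) (auto simp: anchor_def)
qed

lemma anchor_subset: "anchor a A F \<subseteq> A" "anchor a A F \<noteq> {}" "a \<notin> anchor a A F"
proof -
  show a_notin: "a \<notin> anchor a A F"
    using fresh by (auto simp: anchor_def)
  show "anchor a A F \<subseteq> A"
  proof (cases rule: anchor_cases)
    case 2
    then show ?thesis using extension_blocks(1)[OF 2(1)] a_notin by blast
  qed simp
  show "anchor a A F \<noteq> {}"
  proof (cases rule: anchor_cases)
    case 2
    then show ?thesis using extension_blocks(3)[OF 2(1)] by (auto simp: card_insert_if split: if_splits)
  qed (use two_le_card_A in auto)
qed

lemma anchor_nested: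
  assumes "S \<in> F" "a \<notin> S"
  shows "S \<subseteq> anchor a A F \<or> S \<inter> anchor a A F = {}"
proof (cases rule: anchor_cases)
  case 1
  then show ?thesis using extension_blocks(1)[OF assms(1)] assms(2) by auto
next
  case 2
  then show ?thesis using extension_laminar[OF assms(1) 2(1)] assms(2) by auto
qed

lemma leaf_case_blocks:
  assumes Y: "anchor a A F \<notin> F" "card (anchor a A F) \<noteq> 1" and S: "S \<in> F"
  shows "S - {a} \<in> proper_blocks A \<and> insert_if (\<lambda>T. anchor a A F \<subseteq> T) a (S - {a}) = S"
proof -
  let ?Y = "anchor a A F"
  have "finite ?Y" using anchor_subset(1) finite_A finite_subset by blast
  then have two_le_Y: "2 \<le> card ?Y" using Y(2) anchor_subset(2) by (cases "card ?Y") auto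
  show ?thesis
  proof (cases "a \<in> S")
    case True
    then have "?Y \<subseteq> S - {a}" using anchor_below[OF S] anchor_subset(3) by blast
    moreover have "finite (S - {a})" using extension_blocks(1)[OF S] finite_A finite_subset by blast
    ultimately have "2 \<le> card (S - {a})" using two_le_Y card_mono by (metis le_trans)
    moreover have "S - {a} \<subseteq> A" "S - {a} \<noteq> A" using extension_blocks(1,2)[OF S] True by auto
    ultimately show ?thesis using \<open>?Y \<subseteq> S - {a}\<close> True by (auto simp: proper_blocks_def insert_if_def insert_absorb)
  next
    case False
    have "\<not> ?Y \<subseteq> S"
    proof
      assume "?Y \<subseteq> S"
      with anchor_nested[OF S False] anchor_subset(2) have "S = ?Y" by auto
      with Y(1) S show False by simp
    qed
    moreover have "S \<noteq> A"
    proof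
      assume "S = A"
      with anchor_nested[OF S False] have "A \<subseteq> ?Y \<or> A \<inter> ?Y = {}" by simp
      then have "?Y = A" using anchor_subset(1,2) by (auto simp: Int_absorb1)
      then show False using Y(1) S \<open>S = A\<close> by simp
    qed
    moreover have "S \<subseteq> A" using extension_blocks(1)[OF S] False by blast
    ultimately show ?thesis using extension_blocks(3)[OF S] False
      by (simp add: proper_blocks_def insert_if_def)
  qed
qed

lemma leaf_case:
  assumes "anchor a A F \<notin> F" "card (anchor a A F) \<noteq> 1"
  shows "anchor a A F \<in> insert A (restrict_family a A F)"
    and "add_leaf a (restrict_family a A F) (anchor a A F) = F"
proof -
  have restrict: "restrict_family a A F = (\<lambda>S. S - {a}) ` F"
    using leaf_case_blocks[OF assms] by (auto simp: restrict_family_def)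
  show "add_leaf a (restrict_family a A F) (anchor a A F) = F"
    unfolding restrict add_leaf_def image_image using leaf_case_blocks[OF assms] by simp
  show "anchor a A F \<in> insert A (restrict_family a A F)"
  proof (cases rule: anchor_cases)
    case 2
    then have "anchor a A F = insert a (anchor a A F) - {a}" using anchor_subset(3) by simp
    then show ?thesis unfolding restrict using 2(1) by blast
  qed simp
qed

lemma block_case_new_block:
  assumes "anchor a A F \<in> F \<or> card (anchor a A F) = 1"
  shows "new_block a A (anchor a A F) \<in> F"
proof (cases rule: anchor_cases)
  case 1
  then show ?thesis using assms two_le_card_A by (auto simp: new_block_def)
qed (simp add: new_block_def)

lemma block_case_blocks:
  assumes Y: "anchor a A F \<in> F \<or> card (anchor a A F) = 1"
    and S: "S \<in> F" "S \<noteq> new_block a A (anchor a A F)"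
  shows "S - {a} \<in> proper_blocks A \<and> insert_if (\<lambda>T. anchor a A F \<subset> T) a (S - {a}) = S"
proof -
  let ?Y = "anchor a A F"
  show ?thesis
  proof (cases "a \<in> S")
    case True
    then have "insert a ?Y \<in> F" "?Y \<noteq> A" using anchor_cases S(1) by blast+
    then have "?Y \<subset> S - {a}" using anchor_below[OF S(1) True] anchor_subset(3) S(2)
      by (auto simp: new_block_def)
    moreover have "finite (S - {a})" using extension_blocks(1)[OF S(1)] finite_A finite_subset by blast
    ultimately have "card ?Y < card (S - {a})" by (simp add: psubset_card_mono)
    moreover have "card ?Y \<noteq> 0"
      using anchor_subset(1,2) finite_A by (simp add: finite_subset)
    moreover have "S - {a} \<subseteq> A" "S - {a} \<noteq> A" using extension_blocks(1,2)[OF S(1)] True by auto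
    ultimately show ?thesis using \<open>?Y \<subset> S - {a}\<close> True
      by (auto simp: proper_blocks_def insert_if_def insert_absorb)
  next
    case False
    have "\<not> ?Y \<subset> S" using anchor_nested[OF S(1) False] anchor_subset(2) by blast
    moreover have "S \<noteq> A"
    proof
      assume "S = A"
      then show False using anchor_nested[OF S(1) False] anchor_subset(1,2) S(2)
        by (auto simp: new_block_def)
    qed
    ultimately show ?thesis using extension_blocks(1,3)[OF S(1)] False
      by (auto simp: proper_blocks_def insert_if_def)
  qed
qed

lemma block_case_restrict:
  assumes Y: "anchor a A F \<in> F \<or> card (anchor a A F) = 1"
  shows "restrict_family a A F = (\<lambda>S. S - {a}) ` (F - {new_block a A (anchor a A F)})"
proof
  let ?Y = "anchor a A F" and ?N = "new_block a A (anchor a A F)"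
  show "(\<lambda>S. S - {a}) ` (F - {?N}) \<subseteq> restrict_family a A F"
    using block_case_blocks[OF Y] by (auto simp: restrict_family_def)
  have N_Y: "?N - {a} = ?Y" using anchor_subset(1,3) fresh by (auto simp: new_block_def)
  show "restrict_family a A F \<subseteq> (\<lambda>S. S - {a}) ` (F - {?N})"
  proof
    fix T assume "T \<in> restrict_family a A F"
    then obtain S where S: "S \<in> F" "T = S - {a}" "T \<in> proper_blocks A"
      by (auto simp: restrict_family_def)
    show "T \<in> (\<lambda>S. S - {a}) ` (F - {?N})"
    proof (cases "S = ?N")
      case True
      then have "T = ?Y" using S(2) N_Y by simp
      then have "?Y \<in> F - {?N}" "T = ?Y - {a}"
        using Y S(3) anchor_subset(3) by (auto simp: proper_blocks_def new_block_def)
      then show ?thesis by blast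
    qed (use S in blast)
  qed
qed

lemma block_case:
  assumes Y: "anchor a A F \<in> F \<or> card (anchor a A F) = 1"
  shows "anchor a A F \<in> insert A (restrict_family a A F) \<union> (\<lambda>x. {x}) ` A"
    and "add_block a A (restrict_family a A F) (anchor a A F) = F"
proof -
  let ?Y = "anchor a A F"
  define N where "N = new_block a A ?Y"
  note restrict = block_case_restrict[OF Y, folded N_def]
  have "add_block a A (restrict_family a A F) ?Y = insert N (F - {N})"
    unfolding add_block_def N_def[symmetric] restrict image_image
    using block_case_blocks[OF Y, folded N_def] by simp
  then show "add_block a A (restrict_family a A F) ?Y = F"
    using block_case_new_block[OF Y] by (auto simp: N_def)
  show "?Y \<in> insert A (restrict_family a A F) \<union> (\<lambda>x. {x}) ` A"
  proof (cases "card ?Y = 1")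
    case True
    then show ?thesis using anchor_subset(1) by (auto simp: card_1_singleton_iff)
  next
    case False
    then have "?Y \<in> F" using Y by simp
    show ?thesis
    proof (cases "?Y = A")
      case False
      then have "?Y \<in> F - {N}" "?Y = ?Y - {a}"
        using \<open>?Y \<in> F\<close> anchor_subset(3) by (auto simp: N_def new_block_def)
      then show ?thesis unfolding restrict by blast
    qed simp
  qed
qed

lemma decompose_laminar_family:
  shows "(\<exists>G X. decompose a A F = Inl (G, X) \<and> G \<in> laminar_families A \<and> X \<in> insert A G
            \<and> add_leaf a G X = F)
       \<or> (\<exists>G Y. decompose a A F = Inr (G, Y) \<and> G \<in> laminar_families A
            \<and> Y \<in> insert A G \<union> (\<lambda>x. {x}) ` A \<and> add_block a A G Y = F)"
proof (cases "anchor a A F \<in> F \<or> card (anchor a A F) = 1")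
  case True
  then show ?thesis using block_case[OF True] restrict_family_mem[OF F]
    by (simp add: decompose_def)
next
  case False
  then show ?thesis using leaf_case restrict_family_mem[OF F]
    by (simp add: decompose_def)
qed

end

lemma decompose_add_leaf:
  assumes G: "G \<in> laminar_families A" and X: "X \<in> insert A G"
  shows "decompose a A (add_leaf a G X) = Inl (G, X)"
proof -
  note blocks = laminar_family_blocks[OF G]
  have "(\<lambda>S. S - {a}) ` add_leaf a G X = G"
    using blocks(4) by (simp add: add_leaf_def image_image insert_if_Diff)
  then have restrict: "restrict_family a A (add_leaf a G X) = G"
    using G by (auto simp: restrict_family_def laminar_families_def)
  have X_sub: "X \<subseteq> A" "a \<notin> X" "2 \<le> card X" using X blocks fresh two_le_card_A by auto
  have anchor: "anchor a A (add_leaf a G X) = X"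
  proof (cases "X = A")
    case True
    have "\<not> A \<subseteq> S" if "S \<in> G" for S using blocks(1,2)[OF that] by blast
    then show ?thesis unfolding True
      by (intro anchor_eq_top) (auto simp: add_leaf_def insert_if_def blocks(4))
  next
    case False
    then have "X \<in> G" using X by simp
    then show ?thesis using X_sub(2)
      by (intro anchor_eqI) (auto simp: add_leaf_def insert_if_def blocks(4))
  qed
  have "X \<notin> add_leaf a G X"
    using X_sub(2) by (auto simp: add_leaf_def insert_if_def)
  then show ?thesis using restrict anchor X_sub(3) by (simp add: decompose_def)
qed

lemma decompose_add_block:
  assumes G: "G \<in> laminar_families A" and Y: "Y \<in> insert A G \<union> (\<lambda>x. {x}) ` A"
  shows "decompose a A (add_block a A G Y) = Inr (G, Y)"
proof -
  note blocks = laminar_family_blocks[OF G]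
  have "A \<noteq> {}" using two_le_card_A by auto
  then have Y_sub: "Y \<noteq> {}" "Y \<subseteq> A" "a \<notin> Y" using Y blocks fresh by blast+
  have "(\<lambda>S. S - {a}) ` add_block a A G Y = insert Y G"
    using blocks(4) Y_sub(3) fresh
    by (simp add: add_block_def new_block_def image_image insert_if_Diff)
  moreover have "Y \<in> proper_blocks A \<Longrightarrow> Y \<in> G" using Y by (auto simp: proper_blocks_def)
  ultimately have restrict: "restrict_family a A (add_block a A G Y) = G"
    using G by (auto simp: restrict_family_def laminar_families_def)
  have anchor: "anchor a A (add_block a A G Y) = Y"
  proof (cases "Y = A")
    case True
    have "\<not> A \<subset> S" if "S \<in> G" for S using blocks(1)[OF that] by blast
    then show ?thesis unfolding True
      by (intro anchor_eq_top) (auto simp: add_block_def new_block_def insert_if_def blocks(4) fresh)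
  next
    case False
    then show ?thesis using Y_sub(3) blocks(4)
      by (intro anchor_eqI) (auto simp: add_block_def new_block_def insert_if_def)
  qed
  have "Y \<in> add_block a A G Y \<or> card Y = 1"
  proof (cases "Y \<in> G")
    case True
    then have "insert_if (\<lambda>S. Y \<subset> S) a Y \<in> insert_if (\<lambda>S. Y \<subset> S) a ` G" by blast
    then show ?thesis by (simp add: add_block_def insert_if_def)
  next
    case False
    then show ?thesis using Y by (auto simp: add_block_def new_block_def)
  qed
  then show ?thesis using restrict anchor by (simp add: decompose_def)
qed

lemma card_leaf_positions:
  "G \<in> laminar_families A \<Longrightarrow> card (insert A G) = card G + 1"
  using finite_laminar_family[OF finite_A] laminar_family_blocks(2) by (metis Suc_eq_plus1 card_insert_disjoint)

lemma card_block_positions: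
  assumes G: "G \<in> laminar_families A"
  shows "card (insert A G \<union> (\<lambda>x. {x}) ` A) = card G + 1 + card A"
proof -
  have "insert A G \<inter> (\<lambda>x. {x}) ` A = {}"
    using G two_le_card_A by (auto simp: laminar_families_def proper_blocks_def)
  then have "card (insert A G \<union> (\<lambda>x. {x}) ` A) = card (insert A G) + card ((\<lambda>x. {x}) ` A)"
    using finite_laminar_family[OF finite_A G] finite_A by (intro card_Un_disjoint) auto
  then show ?thesis using card_leaf_positions[OF G] by (simp add: card_image)
qed

lemma bij_betw_add_leaf_add_block:
  "bij_betw (case_sum (\<lambda>(G, X). add_leaf a G X) (\<lambda>(G, Y). add_block a A G Y))
     ((SIGMA G:{G \<in> laminar_families A. card G = i}. insert A G)
        <+> (SIGMA G:{G \<in> laminar_families A. card G + 1 = i}. insert A G \<union> (\<lambda>x. {x}) ` A))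
     {F \<in> laminar_families (insert a A). card F = i}"
  (is "bij_betw ?glue (?D1 <+> ?D2) ?T")
proof (rule bij_betw_byWitness[where f' = "decompose a A"])
  show "\<forall>x\<in>?D1 <+> ?D2. decompose a A (?glue x) = x"
    using decompose_add_leaf decompose_add_block by auto
  show "?glue ` (?D1 <+> ?D2) \<subseteq> ?T"
    using add_leaf_mem add_block_mem by auto
  show "\<forall>F\<in>?T. ?glue (decompose a A F) = F"
  proof
    fix F assume "F \<in> ?T"
    then have "F \<in> laminar_families (insert a A)" by simp
    from decompose_laminar_family[OF this] show "?glue (decompose a A F) = F" by auto
  qed
  show "decompose a A ` ?T \<subseteq> ?D1 <+> ?D2"
  proof
    fix x assume "x \<in> decompose a A ` ?T"
    then obtain F where F: "F \<in> laminar_families (insert a A)" "card F = i" "x = decompose a A F"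
      by auto
    from decompose_laminar_family[OF F(1)] show "x \<in> ?D1 <+> ?D2"
      using F add_leaf_mem(2) add_block_mem(2) by auto
  qed
qed

lemma laminar_count_insert:
  "laminar_count (insert a A) i
     = (i + 1) * laminar_count A i + (if i = 0 then 0 else (i + card A) * laminar_count A (i - 1))"
proof -
  define D1 where "D1 = (SIGMA G:{G \<in> laminar_families A. card G = i}. insert A G)"
  define D2 where "D2 = (SIGMA G:{G \<in> laminar_families A. card G + 1 = i}. insert A G \<union> (\<lambda>x. {x}) ` A)"
  have "finite D1" "finite D2"
    using finite_laminar_families[OF finite_A] finite_laminar_family[OF finite_A] finite_A
    by (auto simp: D1_def D2_def)
  then have "laminar_count (insert a A) i = card D1 + card D2"
    using bij_betw_add_leaf_add_block[of i] unfolding laminar_count_def D1_def[symmetric] D2_def[symmetric]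
    by (simp add: bij_betw_same_card[symmetric] card_Plus)
  also have "card D1 = (\<Sum>G\<in>{G \<in> laminar_families A. card G = i}. i + 1)"
    unfolding D1_def using finite_laminar_families[OF finite_A] finite_laminar_family[OF finite_A]
    by (simp add: card_leaf_positions)
  also have "card D2 = (\<Sum>G\<in>{G \<in> laminar_families A. card G + 1 = i}. i + card A)"
    unfolding D2_def using finite_laminar_families[OF finite_A] finite_laminar_family[OF finite_A] finite_A
    by (subst card_SigmaI) (auto intro!: sum.cong simp del: Un_insert_left simp add: card_block_positions)
  also have "{G \<in> laminar_families A. card G + 1 = i}
      = (if i = 0 then {} else {G \<in> laminar_families A. card G = i - 1})"
    by auto
  finally show ?thesis by (simp add: laminar_count_def)
qed

end

definition h_transform :: "nat \<Rightarrow> (nat \<Rightarrow> int) \<Rightarrow> nat \<Rightarrow> int" where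
  "h_transform d f k = (\<Sum>j\<le>k. (-1) ^ (k - j) * int ((d - j) choose (k - j)) * f j)"

lemma binomial_absorption_int:
  "(int r + 1) * int (a choose Suc r) = (int a - int r) * int (a choose r)"
proof (cases "r \<le> a")
  case True
  have "int (Suc r * (a choose Suc r)) = int ((a - r) * (a choose r))"
    by (metis binomial_absorption binomial_absorb_comp)
  then show ?thesis using True by (simp add: of_nat_diff algebra_simps)
qed (simp add: binomial_eq_0)

lemma h_transform_term_recurrence:
  fixes x :: int
  shows "(-1) ^ Suc r * int (Suc a choose Suc r) * (int (j + 1) * x)
           + (-1) ^ r * int (a choose r) * (int (a + 3 + 2 * j) * x)
       = int (r + j + 2) * ((-1) ^ Suc r * int (a choose Suc r) * x)
           + (int (2 * a + 2 + j) - int r) * ((-1) ^ r * int (a choose r) * x)"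
proof -
  have "(-1) ^ r * x * ((int r + 1) * int (a choose Suc r))
      = (-1) ^ r * x * ((int a - int r) * int (a choose r))"
    by (simp only: binomial_absorption_int)
  then show ?thesis by (simp add: algebra_simps)
qed

lemma h_transform_Suc_expand:
  fixes c e :: "nat \<Rightarrow> int"
  assumes "k \<le> D"
    and e: "\<And>j. e j = int (j + 1) * c j + (if j = 0 then 0 else int (D + 2 + j) * c (j - 1))"
  shows "h_transform (Suc D) e (Suc k)
       = (\<Sum>j\<le>k. (-1) ^ (Suc k - j) * int ((Suc D - j) choose (Suc k - j)) * (int (j + 1) * c j)
            + (-1) ^ (k - j) * int ((D - j) choose (k - j)) * (int (D + 3 + j) * c j))
         + int (k + 2) * c (Suc k)"
proof -
  have split: "h_transform (Suc D) e (Suc k)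
      = (\<Sum>j\<le>Suc k. (-1) ^ (Suc k - j) * int ((Suc D - j) choose (Suc k - j)) * (int (j + 1) * c j))
        + (\<Sum>j\<le>Suc k. (-1) ^ (Suc k - j) * int ((Suc D - j) choose (Suc k - j))
             * (if j = 0 then 0 else int (D + 2 + j) * c (j - 1)))"
    unfolding h_transform_def e by (simp add: algebra_simps sum.distrib)
  have top: "(\<Sum>j\<le>Suc k. (-1) ^ (Suc k - j) * int ((Suc D - j) choose (Suc k - j)) * (int (j + 1) * c j))
      = (\<Sum>j\<le>k. (-1) ^ (Suc k - j) * int ((Suc D - j) choose (Suc k - j)) * (int (j + 1) * c j))
        + int (k + 2) * c (Suc k)"
    using \<open>k \<le> D\<close> by simp
  have shift: "(\<Sum>j\<le>Suc k. (-1) ^ (Suc k - j) * int ((Suc D - j) choose (Suc k - j))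
             * (if j = 0 then 0 else int (D + 2 + j) * c (j - 1)))
      = (\<Sum>j\<le>k. (-1) ^ (k - j) * int ((D - j) choose (k - j)) * (int (D + 3 + j) * c j))"
    unfolding sum.atMost_Suc_shift by (simp add: add.commute add.left_commute)
  show ?thesis unfolding split top shift by (simp add: sum.distrib)
qed

lemma h_transform_recurrence:
  fixes c e :: "nat \<Rightarrow> int"
  assumes "k \<le> D"
    and e: "\<And>j. e j = int (j + 1) * c j + (if j = 0 then 0 else int (D + 2 + j) * c (j - 1))"
  shows "h_transform (Suc D) e (Suc k)
       = int (k + 2) * h_transform D c (Suc k) + int (2 * D + 2 - k) * h_transform D c k"
proof -
  define u where "u j = (-1) ^ (Suc k - j) * int ((D - j) choose (Suc k - j)) * c j" for j
  define v where "v j = (-1) ^ (k - j) * int ((D - j) choose (k - j)) * c j" for j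
  have "h_transform (Suc D) e (Suc k)
      = (\<Sum>j\<le>k. int (k + 2) * u j + int (2 * D + 2 - k) * v j) + int (k + 2) * c (Suc k)"
    unfolding h_transform_Suc_expand[OF assms]
  proof (rule arg_cong[where f = "\<lambda>s. s + int (k + 2) * c (Suc k)"], rule sum.cong[OF refl])
    fix j assume "j \<in> {..k}"
    then obtain r a where "k = j + r" "D = j + a"
      using \<open>k \<le> D\<close> by (metis atMost_iff le_Suc_ex le_trans)
    then show "(-1) ^ (Suc k - j) * int ((Suc D - j) choose (Suc k - j)) * (int (j + 1) * c j)
        + (-1) ^ (k - j) * int ((D - j) choose (k - j)) * (int (D + 3 + j) * c j)
        = int (k + 2) * u j + int (2 * D + 2 - k) * v j"
      using h_transform_term_recurrence[of r a j "c j"] \<open>k \<le> D\<close>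
      by (simp add: u_def v_def Suc_diff_le algebra_simps of_nat_diff)
  qed
  also have "\<dots> = int (k + 2) * ((\<Sum>j\<le>k. u j) + c (Suc k)) + int (2 * D + 2 - k) * (\<Sum>j\<le>k. v j)"
    by (simp add: sum.distrib sum_distrib_left distrib_left)
  also have "(\<Sum>j\<le>k. u j) + c (Suc k) = h_transform D c (Suc k)"
    by (simp add: h_transform_def u_def)
  also have "(\<Sum>j\<le>k. v j) = h_transform D c k"
    by (simp add: h_transform_def v_def)
  finally show ?thesis .
qed

lemma wh_vertices_eq: "2 \<le> n \<Longrightarrow> wh_vertices n = proper_blocks {2..n}"
proof -
  assume "2 \<le> n"
  have "card S \<le> n - 2 \<longleftrightarrow> S \<noteq> {2..n}" if "S \<subseteq> {2..n}" for S
  proof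
    show "card S \<le> n - 2 \<Longrightarrow> S \<noteq> {2..n}" using \<open>2 \<le> n\<close> by auto
    assume "S \<noteq> {2..n}"
    then have "card S < card {2..n}" using that by (intro psubset_card_mono) auto
    then show "card S \<le> n - 2" by simp
  qed
  then show ?thesis unfolding wh_vertices_def proper_blocks_def by blast
qed

lemma wh_f_eq_laminar_count:
  "2 \<le> n \<Longrightarrow> wh_f n (int i - 1) = int (laminar_count {2..n} i)"
  by (simp add: wh_f_def wh_faces_def laminar_count_def laminar_families_def laminar_def
      wh_vertices_eq)

lemma laminar_count_interval_recurrence:
  assumes "4 \<le> n"
  shows "laminar_count {2..n} i = (i + 1) * laminar_count {2..n - 1} i
           + (if i = 0 then 0 else (i + (n - 2)) * laminar_count {2..n - 1} (i - 1))"
proof -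
  interpret point_extension "{2..n - 1}" n
    using assms by unfold_locales auto
  have "insert n {2..n - 1} = {2..n}" using assms by auto
  then show ?thesis using laminar_count_insert[of i] assms by simp
qed

lemma laminar_count_vanish:
  assumes "3 \<le> n" "n - 3 < i"
  shows "laminar_count {2..n} i = 0"
  using assms
proof (induction n arbitrary: i rule: nat_induct_at_least)
  case base
  have "proper_blocks {2..3::nat} = {}"
    using card_seteq[of "{2..3::nat}"] by (auto simp: proper_blocks_def)
  then have "laminar_families {2..3::nat} = {{}}"
    by (auto simp: laminar_families_def laminar_def)
  then show ?case using base by (auto simp: laminar_count_def)
next
  case (Suc m)
  then show ?case
    using laminar_count_interval_recurrence[of "Suc m" i] Suc.IH[of i] Suc.IH[of "i - 1"] by auto
qed

lemma wh_h_eq_h_transform: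
  assumes "3 \<le> n" "K \<le> n - 2"
  shows "wh_h n (int K) = h_transform (n - 3) (\<lambda>j. int (laminar_count {2..n} j)) K"
proof (cases "K \<le> n - 3")
  case True
  have "wh_h n (int K) = (\<Sum>i\<in>int ` {..K}. (-1) ^ nat (int K - i)
          * int (nat (int n - 3 - i) choose nat (int K - i)) * wh_f n (i - 1))"
    using True assms(1) by (simp add: wh_h_def atMost_atLeast0 image_int_atLeastAtMost)
  also have "\<dots> = h_transform (n - 3) (\<lambda>j. int (laminar_count {2..n} j)) K"
  proof -
    have "nat (int n - 3 - int j) = n - 3 - j" "nat (int K - int j) = K - j" for j by simp_all
    then show ?thesis unfolding h_transform_def using assms(1)
      by (subst sum.reindex) (auto intro!: sum.cong simp: wh_f_eq_laminar_count)
  qed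
  finally show ?thesis .
next
  case False
  then have K: "K = n - 2" using assms(2) by simp
  have "h_transform (n - 3) (\<lambda>j. int (laminar_count {2..n} j)) K = 0"
    unfolding h_transform_def
  proof (intro sum.neutral ballI)
    fix j assume "j \<in> {..K}"
    show "(-1) ^ (K - j) * int ((n - 3 - j) choose (K - j)) * int (laminar_count {2..n} j) = 0"
    proof (cases "j = K")
      case True
      then show ?thesis using laminar_count_vanish[of n K] K assms(1) by simp
    next
      case False
      then have "n - 3 - j < K - j" using \<open>j \<in> {..K}\<close> K assms(1) by auto
      then show ?thesis by (simp add: binomial_eq_0)
    qed
  qed
  then show ?thesis using K by (simp add: wh_h_def)
qed

lemma wh_h_zero: "3 \<le> n \<Longrightarrow> wh_h n 0 = 1"
  using wh_h_eq_h_transform[of n 0] laminar_count_zero[of "{2..n}"] by (simp add: h_transform_def)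

lemma wh_h_recurrence_Suc:
  assumes "4 \<le> n" "Suc k \<le> n - 3"
  shows "wh_h n (int (Suc k))
       = int (k + 2) * wh_h (n - 1) (int (Suc k)) + int (2 * n - 6 - k) * wh_h (n - 1) (int k)"
proof -
  define D where "D = n - 4"
  define c where "c j = int (laminar_count {2..n - 1} j)" for j
  define e where "e j = int (laminar_count {2..n} j)" for j
  have e_rec: "e j = int (j + 1) * c j + (if j = 0 then 0 else int (D + 2 + j) * c (j - 1))" for j
  proof -
    have "j + (n - 2) = D + 2 + j" using assms(1) by (simp add: D_def)
    then show ?thesis unfolding e_def c_def laminar_count_interval_recurrence[OF assms(1), of j]
      by (cases "j = 0") (simp_all add: algebra_simps)
  qed
  have "k \<le> D" using assms by (simp add: D_def)
  have "wh_h n (int (Suc k)) = h_transform (Suc D) e (Suc k)"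
    using wh_h_eq_h_transform[of n "Suc k"] assms unfolding e_def D_def
    by (simp add: Suc_diff_Suc numeral_eq_Suc)
  also have "\<dots> = int (k + 2) * h_transform D c (Suc k) + int (2 * D + 2 - k) * h_transform D c k"
    by (rule h_transform_recurrence[OF \<open>k \<le> D\<close> e_rec])
  also have "\<dots> = int (k + 2) * wh_h (n - 1) (int (Suc k)) + int (2 * n - 6 - k) * wh_h (n - 1) (int k)"
    using wh_h_eq_h_transform[of "n - 1" "Suc k"] wh_h_eq_h_transform[of "n - 1" k] assms
    unfolding c_def D_def by simp
  finally show ?thesis .
qed

theorem mainTheorem7:
  fixes n :: nat and k :: int
  assumes "n \<ge> 4" and "0 \<le> k" and "k \<le> int n - 3"
  shows "wh_h n k = (k + 1) * wh_h (n - 1) k + (2 * int n - k - 5) * wh_h (n - 1) (k - 1)"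
proof -
  obtain K where k: "k = int K" using assms(2) zero_le_imp_eq_int by blast
  show ?thesis
  proof (cases K)
    case 0
    then show ?thesis using k assms(1) by (simp add: wh_h_zero) (simp add: wh_h_def)
  next
    case (Suc k')
    then have "k + 1 = int (k' + 2)" "k - 1 = int k'" "2 * int n - k - 5 = int (2 * n - 6 - k')"
      using k assms by auto
    then show ?thesis using wh_h_recurrence_Suc[of n k'] Suc k assms by simp
  qed
qed

end
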